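(* Let $\Gamma=(N,A,u)$ be a game and suppose there exist a matching $M$ of the strategy sets and a transitive subgroup $H$ of $S_N$ such that $M_\pi$ is an automorphism of $\Gamma$ for every $\pi\in H$. Then for all $i,j\in N$ we have $u_i(s)=u_j(s)$ for all $s\in M$.
   Context: A (finite normal-form) game $\Gamma=(N,A,u)$ consists of a finite set $N$ of $n\ge 2$ players, a finite non-empty strategy set $A_i$ for each $i\in N$ (all of the same cardinality), $A=\times_{i\in N}A_i$, and utility functions $u_i:A\to\mathbb{R}$. A game bijection $g=(\pi;(\tau_i)_{i\in N})$ of $\Gamma$ to itself consists of a permutation $\pi$ of $N$ and bijections $\tau_i:A_i\to A_{\pi(i)}$; $g.i=\pi(i)$ and $g.s$ is the profile with $(g.s)_{\pi(i)}=\tau_i(s_i)$. An automorphism is a game bijection with $u_i(s)=u_{g.i}(g.s)$ for all $i\in N,s\in A$. A matching of $A_1,\dots,A_n$ is a set $M\subseteq A$ of $n$-tuples such that every element of every $A_i$ appears in exactly one tuple of $M$; it induces bijections $M_{ij}:A_i\to A_j$ sending $a_i$ to the $j$-th entry of the unique tuple containing $a_i$. For $\pi\in S_N$, $M_\pi=(\pi;(M_{i\pi(i)})_{i\in N})$. *)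

theory Defs
  imports Complex_Main "HOL-Combinatorics.Permutations"
begin

text \<open>Players form a finite set N of type 'n; strategies have a common ambient type 'a,
  player i's strategy set is A i; profiles are the extensional functions in PiE N A;
  utilities are u i s.\<close>

definition game :: "'n set \<Rightarrow> ('n \<Rightarrow> 'a set) \<Rightarrow> ('n \<Rightarrow> ('n \<Rightarrow> 'a) \<Rightarrow> real) \<Rightarrow> bool" where
  "game N A u \<longleftrightarrow> finite N \<and> card N \<ge> 2 \<and>
     (\<forall>i\<in>N. finite (A i) \<and> A i \<noteq> {}) \<and>
     (\<forall>i\<in>N. \<forall>j\<in>N. card (A i) = card (A j))"

definition profiles :: "'n set \<Rightarrow> ('n \<Rightarrow> 'a set) \<Rightarrow> ('n \<Rightarrow> 'a) set" where
  "profiles N A = PiE N A"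

definition game_bijection :: "'n set \<Rightarrow> ('n \<Rightarrow> 'a set) \<Rightarrow> ('n \<Rightarrow> 'n) \<Rightarrow> ('n \<Rightarrow> 'a \<Rightarrow> 'a) \<Rightarrow> bool" where
  "game_bijection N A \<pi> \<tau> \<longleftrightarrow> \<pi> permutes N \<and> (\<forall>i\<in>N. bij_betw (\<tau> i) (A i) (A (\<pi> i)))"

text \<open>Action on profiles: (g.s)_{pi i} = tau_i (s_i).\<close>
definition gb_act :: "'n set \<Rightarrow> ('n \<Rightarrow> 'n) \<Rightarrow> ('n \<Rightarrow> 'a \<Rightarrow> 'a) \<Rightarrow> ('n \<Rightarrow> 'a) \<Rightarrow> ('n \<Rightarrow> 'a)" where
  "gb_act N \<pi> \<tau> s = (\<lambda>j. if j \<in> N then \<tau> (inv \<pi> j) (s (inv \<pi> j)) else undefined)"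

definition automorphism :: "'n set \<Rightarrow> ('n \<Rightarrow> 'a set) \<Rightarrow> ('n \<Rightarrow> ('n \<Rightarrow> 'a) \<Rightarrow> real)
    \<Rightarrow> ('n \<Rightarrow> 'n) \<Rightarrow> ('n \<Rightarrow> 'a \<Rightarrow> 'a) \<Rightarrow> bool" where
  "automorphism N A u \<pi> \<tau> \<longleftrightarrow> game_bijection N A \<pi> \<tau> \<and>
     (\<forall>i\<in>N. \<forall>s\<in>profiles N A. u i s = u (\<pi> i) (gb_act N \<pi> \<tau> s))"

definition matching :: "'n set \<Rightarrow> ('n \<Rightarrow> 'a set) \<Rightarrow> ('n \<Rightarrow> 'a) set \<Rightarrow> bool" where
  "matching N A M \<longleftrightarrow> M \<subseteq> profiles N A \<and> (\<forall>i\<in>N. \<forall>a\<in>A i. \<exists>!t. t \<in> M \<and> t i = a)"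

definition matching_map :: "('n \<Rightarrow> 'a) set \<Rightarrow> 'n \<Rightarrow> 'n \<Rightarrow> 'a \<Rightarrow> 'a" where
  "matching_map M i j a = (THE t. t \<in> M \<and> t i = a) j"

definition matching_perm :: "('n \<Rightarrow> 'a) set \<Rightarrow> ('n \<Rightarrow> 'n) \<Rightarrow> 'n \<Rightarrow> 'a \<Rightarrow> 'a" where
  "matching_perm M \<pi> = (\<lambda>i. matching_map M i (\<pi> i))"

definition perm_subgroup :: "'n set \<Rightarrow> ('n \<Rightarrow> 'n) set \<Rightarrow> bool" where
  "perm_subgroup N H \<longleftrightarrow> (\<forall>\<pi>\<in>H. \<pi> permutes N) \<and> id \<in> H \<and>
     (\<forall>\<pi>\<in>H. \<forall>\<sigma>\<in>H. \<pi> \<circ> \<sigma> \<in> H) \<and> (\<forall>\<pi>\<in>H. inv \<pi> \<in> H)"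

definition transitive_on :: "'n set \<Rightarrow> ('n \<Rightarrow> 'n) set \<Rightarrow> bool" where
  "transitive_on N H \<longleftrightarrow> (\<forall>i\<in>N. \<forall>j\<in>N. \<exists>\<pi>\<in>H. \<pi> i = j)"

end

theory Submission
  imports Defs
begin

text \<open>Every matched profile s \<in> M is a fixed point of each M_\<pi>, because M_\<pi> sends the
  strategy s i of player i to the strategy of player \<pi> i in the unique tuple containing s i,
  which is s itself. An automorphism fixing s gives u i s = u (\<pi> i) s, and transitivity of H
  lets \<pi> i range over all players.\<close>

lemma matching_subset_profiles:
  assumes "matching N A M" and "s \<in> M"
  shows "s \<in> profiles N A"
  using assms unfolding matching_def by blast

lemma matching_map_apply:
  assumes M: "matching N A M" and s: "s \<in> M" and i: "i \<in> N"
  shows "matching_map M i j (s i) = s j"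
proof -
  have "s i \<in> A i"
    using matching_subset_profiles[OF M s] i unfolding profiles_def by auto
  then have "\<exists>!t. t \<in> M \<and> t i = s i"
    using M i unfolding matching_def by blast
  then have "(THE t. t \<in> M \<and> t i = s i) = s"
    using s by (blast intro: the1_equality)
  then show ?thesis
    unfolding matching_map_def by simp
qed

lemma gb_act_matching_perm_fixes_matching:
  assumes M: "matching N A M" and perm: "\<pi> permutes N" and s: "s \<in> M"
  shows "gb_act N \<pi> (matching_perm M \<pi>) s = s"
proof
  fix x
  show "gb_act N \<pi> (matching_perm M \<pi>) s x = s x"
  proof (cases "x \<in> N")
    case True
    then have "inv \<pi> x \<in> N" and "\<pi> (inv \<pi> x) = x"
      using perm by (simp_all add: permutes_in_image permutes_inv permutes_inverses(1))
    then show ?thesis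
      using True matching_map_apply[OF M s]
      unfolding gb_act_def matching_perm_def by simp
  next
    case False
    then show ?thesis
      using matching_subset_profiles[OF M s]
      unfolding gb_act_def profiles_def PiE_def extensional_def by auto
  qed
qed

lemma automorphism_utility_at_fixed_point:
  assumes "automorphism N A u \<pi> \<tau>" and "i \<in> N" and "s \<in> profiles N A"
    and "gb_act N \<pi> \<tau> s = s"
  shows "u i s = u (\<pi> i) s"
  using assms unfolding automorphism_def by metis

theorem mainTheorem12:
  fixes N :: "'n set" and A :: "'n \<Rightarrow> 'a set" and u :: "'n \<Rightarrow> ('n \<Rightarrow> 'a) \<Rightarrow> real"
    and M :: "('n \<Rightarrow> 'a) set" and H :: "('n \<Rightarrow> 'n) set"
  assumes "game N A u"
    and "matching N A M"
    and "perm_subgroup N H" and "transitive_on N H"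
    and "\<forall>\<pi>\<in>H. automorphism N A u \<pi> (matching_perm M \<pi>)"
  shows "\<forall>i\<in>N. \<forall>j\<in>N. \<forall>s\<in>M. u i s = u j s"
proof (intro ballI)
  fix i j s assume i: "i \<in> N" and j: "j \<in> N" and s: "s \<in> M"
  obtain \<pi> where \<pi>: "\<pi> \<in> H" "\<pi> i = j"
    using assms(4) i j unfolding transitive_on_def by blast
  have "\<pi> permutes N"
    using assms(3) \<pi>(1) unfolding perm_subgroup_def by blast
  then have "gb_act N \<pi> (matching_perm M \<pi>) s = s"
    by (rule gb_act_matching_perm_fixes_matching[OF assms(2) _ s])
  moreover have "automorphism N A u \<pi> (matching_perm M \<pi>)"
    using assms(5) \<pi>(1) by blast
  ultimately have "u i s = u (\<pi> i) s"
    using automorphism_utility_at_fixed_point i matching_subset_profiles[OF assms(2) s]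
    by metis
  then show "u i s = u j s"
    using \<pi>(2) by simp
qed

end
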